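(* Assume the setting and Assumptions A1–A4 below. Run Ader with dynamical models (below) with \[ \mathcal{H}=\Big\{\eta_i=\frac{2^{i-1}D}{G}\sqrt{\frac1T}\ :\ i=1,\dots,N\Big\},\quad N=\Big\lceil\tfrac12\log_2(1+2T)\Big\rceil+1,\quad\alpha=\sqrt{8/(Tc^2)}. \] Then for any comparator sequence $\mathbf{u}_1,\dots,\mathbf{u}_{T+1}\in\mathcal{X}$, with $P_T'=\sum_{t=1}^T\|\mathbf{u}_{t+1}-\Phi_t(\mathbf{u}_t)\|_2$ and $k=\lfloor\frac12\log_2(1+\frac{2P_T'}{D})\rfloor+1$, \[ \sum_{t=1}^T f_t(\mathbf{x}_t)-\sum_{t=1}^T f_t(\mathbf{u}_t)\le\frac{3G}{2}\sqrt{T(D^2+2DP_T')}+\frac{c\sqrt{2T}}{4}\big[1+2\ln(k+1)\big]=O\big(\sqrt{T(1+P_T')}\big). \]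
   Context: Setting: $\mathcal{X}\subseteq\mathbb{R}^d$ nonempty closed convex; $f_t:\mathcal{X}\to\mathbb{R}$ convex differentiable, revealed after $\mathbf{x}_t$ is played. A1: $a\le f_t(\mathbf{x})\le a+c$ on $\mathcal{X}$. A2: $\max_{\mathbf{x}\in\mathcal{X}}\|\nabla f_t(\mathbf{x})\|_2\le G$. A3: $\mathbf{0}\in\mathcal{X}$, diameter of $\mathcal{X}$ at most $D$. A4: given maps $\Phi_t:\mathcal{X}\to\mathcal{X}$ with $\|\Phi_t(\mathbf{x})-\Phi_t(\mathbf{x}')\|_2\le\|\mathbf{x}-\mathbf{x}'\|_2$. Ader with dynamical models: for $\mathcal{H}=\{\eta_1\le\dots\le\eta_N\}$, one expert per $\eta$ starting at arbitrary $\mathbf{x}_1^\eta\in\mathcal{X}$ and updating $\bar{\mathbf{x}}_{t+1}^\eta=\Pi_{\mathcal{X}}[\mathbf{x}_t^\eta-\eta\nabla f_t(\mathbf{x}_t^\eta)]$, $\mathbf{x}_{t+1}^\eta=\Phi_t(\bar{\mathbf{x}}_{t+1}^\eta)$; initial weights $w_1^{\eta_i}=\frac{C}{i(i+1)}$, $C=1+1/N$; output $\mathbf{x}_t=\sum_\eta w_t^\eta\mathbf{x}_t^\eta$; weights $w_{t+1}^\eta=\frac{w_t^\eta e^{-\alpha f_t(\mathbf{x}_t^\eta)}}{\sum_\mu w_t^\mu e^{-\alpha f_t(\mathbf{x}_t^\mu)}}$. *)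

theory Defs
  imports "HOL-Analysis.Analysis"
begin

text \<open>Time index t starts at 1; the value at index 0 is irrelevant.\<close>

fun ader_expert :: "'a::euclidean_space set \<Rightarrow> (nat \<Rightarrow> 'a \<Rightarrow> 'a) \<Rightarrow> (nat \<Rightarrow> 'a \<Rightarrow> 'a)
     \<Rightarrow> (nat \<Rightarrow> real) \<Rightarrow> (nat \<Rightarrow> 'a) \<Rightarrow> nat \<Rightarrow> nat \<Rightarrow> 'a" where
  "ader_expert X Phi grad eta x1 i 0 = x1 i"
| "ader_expert X Phi grad eta x1 i (Suc t) =
     (if t = 0 then x1 i
      else Phi t (closest_point X (ader_expert X Phi grad eta x1 i t
                                   - eta i *\<^sub>R grad t (ader_expert X Phi grad eta x1 i t))))"

fun ader_weight :: "(nat \<Rightarrow> 'a \<Rightarrow> real) \<Rightarrow> nat \<Rightarrow> real \<Rightarrow> (nat \<Rightarrow> nat \<Rightarrow> 'a) \<Rightarrow> nat \<Rightarrow> nat \<Rightarrow> real" where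
  "ader_weight f N alpha ex 0 i = (1 + 1 / real N) / (real i * (real i + 1))"
| "ader_weight f N alpha ex (Suc t) i =
     (if t = 0 then (1 + 1 / real N) / (real i * (real i + 1))
      else ader_weight f N alpha ex t i * exp (- alpha * f t (ex i t))
           / (\<Sum>j\<in>{1..N}. ader_weight f N alpha ex t j * exp (- alpha * f t (ex j t))))"

definition ader_output :: "(nat \<Rightarrow> 'a \<Rightarrow> real) \<Rightarrow> nat \<Rightarrow> real \<Rightarrow> (nat \<Rightarrow> nat \<Rightarrow> 'a::real_vector) \<Rightarrow> nat \<Rightarrow> 'a" where
  "ader_output f N alpha ex t = (\<Sum>i\<in>{1..N}. ader_weight f N alpha ex t i *\<^sub>R ex i t)"

end

theory Submission
  imports Defs "HOL-Probability.Hoeffding"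
begin

text \<open>Telescoping \<open>\<parallel>x\<^sub>t - u\<^sub>t\<parallel>\<^sup>2\<close> against a dynamic comparator leaves, besides
  \<open>\<eta>G\<^sup>2/2\<close> per round, only the drift \<open>\<parallel>u\<^sub>t\<^sub>+\<^sub>1 - \<Phi>\<^sub>t u\<^sub>t\<parallel>\<close> weighted by \<open>2D\<close>, so
  the expert with step \<open>\<eta>\<close> has regret \<open>(D\<^sup>2 + 2DP)/(2\<eta>) + \<eta>TG\<^sup>2/2\<close>. The geometric grid
  contains a step within a factor 2 of the minimiser, which gives \<open>3G/2 \<cdot> \<surd>(T(D\<^sup>2 + 2DP))\<close>.
  The meta-algorithm weights the experts exponentially in their losses: by convexity and
  Hoeffding's lemma the log-potential drops by at least \<open>\<alpha>f\<^sub>t(x\<^sub>t) - \<alpha>\<^sup>2c\<^sup>2/8\<close> per round,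
  so the regret against expert \<open>k\<close> is \<open>ln(1/w\<^sub>1\<^sup>k)/\<alpha> + T\<alpha>c\<^sup>2/8\<close>, and
  \<open>w\<^sub>1\<^sup>k \<ge> 1/(k+1)\<^sup>2\<close> with the tuned \<open>\<alpha>\<close> turns this into \<open>c\<surd>(2T)/4 \<cdot> (1 + 2 ln(k+1))\<close>.\<close>

lemma hoeffding_bernoulli_mgf_le:
  fixes h p :: real
  assumes h: "h \<ge> 0" and p: "0 \<le> p" "p \<le> 1"
  shows "1 - p + p * exp (-h) \<le> exp (h\<^sup>2 / 8 - h * p)"
proof -
  have pos: "1 - p + p * exp (-h) > 0"
    using p by (cases "p = 1") (auto intro: add_nonneg_pos add_pos_nonneg)
  have "1 + (1 - p) * (exp h - 1) = exp h * (1 - p + p * exp (-h))"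
    by (simp add: algebra_simps exp_minus)
  hence "ln (1 + (1 - p) * (exp h - 1)) = h + ln (1 - p + p * exp (-h))"
    using pos by (simp add: ln_mult)
  moreover have "-h * (1 - p) + ln (1 + (1 - p) * (exp h - 1)) \<le> h\<^sup>2 / 8"
    using Hoeffdings_lemma_aux[of h "1 - p"] h p by simp
  ultimately have "ln (1 - p + p * exp (-h)) \<le> h\<^sup>2 / 8 - h * p"
    by (simp add: algebra_simps)
  thus ?thesis
    using pos by (metis exp_le_cancel_iff exp_ln)
qed

lemma exp_neg_le_chord:
  fixes l y a c :: real
  assumes "a \<le> y" "y \<le> a + c" "c > 0"
  shows "exp (-l * y) \<le> exp (-l * a) + (y - a) / c * (exp (-l * (a + c)) - exp (-l * a))"
proof -
  define s where "s = (y - a) / c"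
  have s: "0 \<le> s" "s \<le> 1" using assms by (auto simp: s_def divide_simps)
  have "-l * y = (1 - s) * (-l * a) + s * (-l * (a + c))"
    using assms by (simp add: s_def field_simps)
  also have "exp \<dots> \<le> (1 - s) * exp (-l * a) + s * exp (-l * (a + c))"
    using convex_onD[OF exp_convex, of s "-l * a" "-l * (a + c)"] s by simp
  finally show ?thesis by (simp add: s_def algebra_simps)
qed

lemma weighted_exp_le_hoeffding:
  fixes w y :: "'i \<Rightarrow> real"
  assumes S: "finite S" and w1: "sum w S = 1" and w0: "\<And>i. i \<in> S \<Longrightarrow> w i \<ge> 0"
    and y: "\<And>i. i \<in> S \<Longrightarrow> a \<le> y i \<and> y i \<le> a + c" and c: "c > 0" and l: "l \<ge> 0"
  shows "(\<Sum>i\<in>S. w i * exp (-l * y i)) \<le> exp (-l * (\<Sum>i\<in>S. w i * y i) + l\<^sup>2 * c\<^sup>2 / 8)"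
proof -
  define m where "m = (\<Sum>i\<in>S. w i * y i)"
  define p where "p = (m - a) / c"
  define d where "d = (exp (-l * (a + c)) - exp (-l * a)) / c"
  have "(\<Sum>i\<in>S. w i * a) \<le> m" "m \<le> (\<Sum>i\<in>S. w i * (a + c))"
    unfolding m_def by (auto intro!: sum_mono mult_left_mono simp: y w0)
  hence p: "0 \<le> p" "p \<le> 1"
    using w1 c by (auto simp: p_def divide_simps sum_distrib_right[symmetric])
  have "(\<Sum>i\<in>S. w i * exp (-l * y i))
      \<le> (\<Sum>i\<in>S. w i * (exp (-l * a) + (y i - a) / c * (exp (-l * (a + c)) - exp (-l * a))))"
    by (intro sum_mono mult_left_mono exp_neg_le_chord) (auto simp: y w0 c)
  also have "\<dots> = (\<Sum>i\<in>S. w i * exp (-l * a) + (w i * y i - w i * a) * d)"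
    using c by (intro sum.cong) (auto simp: d_def field_simps)
  also have "\<dots> = exp (-l * a) + (m - a) * d"
    using w1 by (simp add: m_def sum.distrib sum_subtractf
        sum_distrib_left[symmetric] sum_distrib_right[symmetric])
  also have "\<dots> = exp (-l * a) + p * (exp (-l * (a + c)) - exp (-l * a))"
    by (simp add: p_def d_def)
  also have "\<dots> = exp (-l * a) * (1 - p + p * exp (-(l * c)))"
    by (simp add: algebra_simps exp_add[symmetric])
  also have "\<dots> \<le> exp (-l * a) * exp ((l * c)\<^sup>2 / 8 - l * c * p)"
    using hoeffding_bernoulli_mgf_le[of "l * c" p] l c p by simp
  also have "\<dots> = exp (-l * m + l\<^sup>2 * c\<^sup>2 / 8)"
    using c by (simp add: exp_add[symmetric] p_def field_simps power2_eq_square)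
  finally show ?thesis by (simp add: m_def)
qed

definition ader_prior :: "nat \<Rightarrow> nat \<Rightarrow> real" where
  "ader_prior N i = (1 + 1 / real N) / (real i * (real i + 1))"

definition ader_potential ::
    "(nat \<Rightarrow> 'a \<Rightarrow> real) \<Rightarrow> nat \<Rightarrow> real \<Rightarrow> (nat \<Rightarrow> nat \<Rightarrow> 'a) \<Rightarrow> nat \<Rightarrow> real" where
  "ader_potential f N alpha ex s =
     (\<Sum>j=1..N. ader_prior N j * exp (- alpha * (\<Sum>\<tau>=1..s. f \<tau> (ex j \<tau>))))"

lemma sum_inverse_consecutive_products:
  "(\<Sum>i=1..n. 1 / (real i * (real i + 1))) = real n / (real n + 1)"
proof (induction n)
  case (Suc n)
  have "real n + 1 > 0" "real n + 2 > 0" by linarith+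
  hence "real n / (real n + 1) + 1 / ((real n + 1) * (real n + 2)) = (real n + 1) / (real n + 2)"
    by (simp add: divide_simps) (simp add: algebra_simps)
  with Suc.IH show ?case by (simp add: add.commute)
qed simp

lemma sum_ader_prior:
  assumes "N \<ge> 1"
  shows "(\<Sum>i=1..N. ader_prior N i) = 1"
proof -
  have "(\<Sum>i=1..N. ader_prior N i) = (1 + 1 / real N) * (\<Sum>i=1..N. 1 / (real i * (real i + 1)))"
    by (simp add: ader_prior_def sum_distrib_left)
  also have "\<dots> = (1 + 1 / real N) * (real N / (real N + 1))"
    by (simp only: sum_inverse_consecutive_products)
  also have "\<dots> = 1"
    using assms by (simp add: divide_simps)
  finally show ?thesis .
qed

lemma ader_prior_pos: "i \<ge> 1 \<Longrightarrow> ader_prior N i > 0"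
  unfolding ader_prior_def by (auto intro!: divide_pos_pos add_pos_nonneg)

lemma ln_inverse_ader_prior_le:
  assumes "i \<ge> 1"
  shows "ln (1 / ader_prior N i) \<le> 2 * ln (real i + 1)"
proof -
  have "1 / ader_prior N i = real i * (real i + 1) / (1 + 1 / real N)"
    by (simp add: ader_prior_def)
  also have "\<dots> \<le> (real i + 1) ^ 2"
    by (intro mult_imp_div_pos_le add_pos_nonneg) (auto simp: power2_eq_square field_simps)
  finally have "ln (1 / ader_prior N i) \<le> ln ((real i + 1) ^ 2)"
    using ader_prior_pos[OF assms] by (intro ln_mono) auto
  thus ?thesis by (simp add: ln_realpow)
qed

lemma ader_potential_pos: "N \<ge> 1 \<Longrightarrow> ader_potential f N alpha ex s > 0"
  unfolding ader_potential_def by (intro sum_pos) (auto intro!: mult_pos_pos ader_prior_pos)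

lemma ader_potential_0: "N \<ge> 1 \<Longrightarrow> ader_potential f N alpha ex 0 = 1"
  using sum_ader_prior by (simp add: ader_potential_def)

lemma exp_neg_cumulative_loss_Suc:
  fixes f :: "nat \<Rightarrow> 'a \<Rightarrow> real"
  shows "exp (- alpha * (\<Sum>\<tau>=1..Suc s. f \<tau> (ex j \<tau>)))
     = exp (- alpha * (\<Sum>\<tau>=1..s. f \<tau> (ex j \<tau>))) * exp (- alpha * f (Suc s) (ex j (Suc s)))"
  by (simp add: ring_distribs flip: exp_add)

lemma sum_reweighted_ader_prior:
  "(\<Sum>j=1..N. ader_prior N j * exp (- alpha * (\<Sum>\<tau>=1..s. f \<tau> (ex j \<tau>)))
      / ader_potential f N alpha ex s * exp (- alpha * f (Suc s) (ex j (Suc s))))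
   = ader_potential f N alpha ex (Suc s) / ader_potential f N alpha ex s"
  unfolding ader_potential_def exp_neg_cumulative_loss_Suc
  by (simp add: sum_divide_distrib mult.assoc)

lemma ader_weight_eq:
  assumes N: "N \<ge> 1" and t: "t \<ge> 1"
  shows "ader_weight f N alpha ex t i
           = ader_prior N i * exp (- alpha * (\<Sum>\<tau>=1..t-1. f \<tau> (ex i \<tau>)))
             / ader_potential f N alpha ex (t - 1)"
  using t
proof (induction t arbitrary: i)
  case (Suc t)
  show ?case
  proof (cases "t = 0")
    case True
    thus ?thesis using ader_potential_0[OF N, of f alpha ex] by (simp add: ader_prior_def)
  next
    case False
    then obtain s where s: "t = Suc s" by (cases t) auto
    hence ts: "t - 1 = s" by simp
    let ?\<Phi> = "ader_potential f N alpha ex" and ?e = "\<lambda>j. exp (- alpha * f t (ex j t))"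
    have IH: "ader_weight f N alpha ex t j
        = ader_prior N j * exp (- alpha * (\<Sum>\<tau>=1..s. f \<tau> (ex j \<tau>))) / ?\<Phi> s" for j
      using Suc.IH[of j] False unfolding ts by simp
    have "(\<Sum>j=1..N. ader_weight f N alpha ex t j * ?e j) = ?\<Phi> t / ?\<Phi> s"
      unfolding IH by (rule sum_reweighted_ader_prior[where s=s, folded s])
    hence "ader_weight f N alpha ex (Suc t) i = ader_weight f N alpha ex t i * ?e i / (?\<Phi> t / ?\<Phi> s)"
      using False by simp
    also have "\<dots> = ader_prior N i * exp (- alpha * (\<Sum>\<tau>=1..t. f \<tau> (ex i \<tau>))) / ?\<Phi> t"
      using ader_potential_pos[OF N, of f alpha ex s]
      unfolding IH unfolding s exp_neg_cumulative_loss_Suc by (simp add: field_simps)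
    finally show ?thesis by simp
  qed
qed simp

lemma sum_ader_weight:
  assumes "N \<ge> 1" "t \<ge> 1"
  shows "(\<Sum>j=1..N. ader_weight f N alpha ex t j) = 1"
  unfolding ader_weight_eq[OF assms] sum_divide_distrib[symmetric] ader_potential_def[symmetric]
  using ader_potential_pos[OF assms(1), of f alpha ex "t - 1"] by simp

lemma ader_weight_nonneg:
  assumes "N \<ge> 1" "t \<ge> 1" "i \<ge> 1"
  shows "ader_weight f N alpha ex t i \<ge> 0"
  unfolding ader_weight_eq[OF assms(1,2)]
  by (intro divide_nonneg_pos mult_nonneg_nonneg less_imp_le[OF ader_prior_pos]
      ader_potential_pos assms) simp

lemma ader_weighted_exp_loss:
  assumes N: "N \<ge> 1" and t: "t \<ge> 1"
  shows "(\<Sum>j=1..N. ader_weight f N alpha ex t j * exp (- alpha * f t (ex j t)))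
           = ader_potential f N alpha ex t / ader_potential f N alpha ex (t - 1)"
proof -
  obtain s where s: "t = Suc s" using t by (cases t) auto
  hence ts: "t - 1 = s" by simp
  show ?thesis
    unfolding ader_weight_eq[OF N t] ts
    by (rule sum_reweighted_ader_prior[where s=s, folded s])
qed

lemma ader_output_loss_le:
  fixes f :: "nat \<Rightarrow> 'a::real_vector \<Rightarrow> real" and ex :: "nat \<Rightarrow> nat \<Rightarrow> 'a"
  assumes N: "N \<ge> 1" and t: "t \<ge> 1" and alpha: "alpha > 0" and c: "c > 0"
    and conv: "convex_on X (f t)"
    and ex: "\<And>i. i \<in> {1..N} \<Longrightarrow> ex i t \<in> X"
    and bounded: "\<And>x. x \<in> X \<Longrightarrow> a \<le> f t x \<and> f t x \<le> a + c"
  shows "f t (ader_output f N alpha ex t)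
           \<le> (ln (ader_potential f N alpha ex (t - 1)) - ln (ader_potential f N alpha ex t)) / alpha
             + alpha * c\<^sup>2 / 8"
proof -
  let ?\<Phi> = "ader_potential f N alpha ex"
  define m where "m = (\<Sum>i=1..N. ader_weight f N alpha ex t i * f t (ex i t))"
  have "f t (ader_output f N alpha ex t) \<le> m"
    unfolding ader_output_def m_def
    by (rule convex_on_sum[OF _ _ conv])
      (use N in \<open>simp_all add: sum_ader_weight[OF N t, simplified] ader_weight_nonneg[OF N t] ex\<close>)
  moreover have "?\<Phi> t / ?\<Phi> (t - 1) \<le> exp (- alpha * m + alpha\<^sup>2 * c\<^sup>2 / 8)"
    unfolding ader_weighted_exp_loss[OF N t, symmetric] m_def
    by (rule weighted_exp_le_hoeffding[where a = a])
      (use alpha c in \<open>simp_all add: sum_ader_weight[OF N t, simplified] ader_weight_nonneg[OF N t] bounded ex\<close>)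
  hence "ln (?\<Phi> t / ?\<Phi> (t - 1)) \<le> - alpha * m + alpha\<^sup>2 * c\<^sup>2 / 8"
    using ader_potential_pos[OF N, of f alpha ex t] ader_potential_pos[OF N, of f alpha ex "t - 1"]
    by (subst ln_exp[symmetric], intro ln_mono) auto
  hence "ln (?\<Phi> t) - ln (?\<Phi> (t - 1)) \<le> - alpha * m + alpha\<^sup>2 * c\<^sup>2 / 8"
    using ader_potential_pos[OF N, of f alpha ex t] ader_potential_pos[OF N, of f alpha ex "t - 1"]
    by (simp add: ln_div)
  hence "m \<le> (ln (?\<Phi> (t - 1)) - ln (?\<Phi> t)) / alpha + alpha * c\<^sup>2 / 8"
    using alpha by (simp add: field_simps power2_eq_square)
  ultimately show ?thesis by linarith
qed

lemma ader_output_regret: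
  fixes f :: "nat \<Rightarrow> 'a::real_vector \<Rightarrow> real" and ex :: "nat \<Rightarrow> nat \<Rightarrow> 'a"
  assumes N: "N \<ge> 1" and alpha: "alpha > 0" and c: "c > 0"
    and conv: "\<And>t. convex_on X (f t)"
    and ex: "\<And>i t. i \<in> {1..N} \<Longrightarrow> ex i t \<in> X"
    and bounded: "\<And>t x. x \<in> X \<Longrightarrow> a \<le> f t x \<and> f t x \<le> a + c"
    and k: "k \<in> {1..N}"
  shows "(\<Sum>t=1..T. f t (ader_output f N alpha ex t))
           \<le> (\<Sum>t=1..T. f t (ex k t)) + ln (1 / ader_prior N k) / alpha + real T * (alpha * c\<^sup>2 / 8)"
proof -
  let ?\<Phi> = "ader_potential f N alpha ex" and ?L = "\<Sum>t=1..T. f t (ex k t)"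
  have telescope: "(\<Sum>t=1..n. ln (?\<Phi> (t - 1)) - ln (?\<Phi> t)) = ln (?\<Phi> 0) - ln (?\<Phi> n)" for n
    by (induction n) simp_all
  have "ader_prior N k * exp (- alpha * ?L) \<le> ?\<Phi> T"
    unfolding ader_potential_def using k ader_prior_pos[of k N]
    by (intro member_le_sum[of k "{1..N}" "\<lambda>j. ader_prior N j * exp (- alpha * (\<Sum>t=1..T. f t (ex j t)))"])
      (auto intro!: mult_nonneg_nonneg less_imp_le[OF ader_prior_pos])
  hence "ln (ader_prior N k * exp (- alpha * ?L)) \<le> ln (?\<Phi> T)"
    using k ader_prior_pos[of k N] by (intro ln_mono) auto
  hence "- ln (?\<Phi> T) \<le> ln (1 / ader_prior N k) + alpha * ?L"
    using k ader_prior_pos[of k N] by (simp add: ln_mult ln_div)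
  hence "- ln (?\<Phi> T) / alpha \<le> (ln (1 / ader_prior N k) + alpha * ?L) / alpha"
    using alpha by (intro divide_right_mono) auto
  also have "\<dots> = ?L + ln (1 / ader_prior N k) / alpha"
    using alpha by (simp add: field_simps)
  finally have potential: "- ln (?\<Phi> T) / alpha \<le> ?L + ln (1 / ader_prior N k) / alpha" .
  have "(\<Sum>t=1..T. f t (ader_output f N alpha ex t))
      \<le> (\<Sum>t=1..T. (ln (?\<Phi> (t - 1)) - ln (?\<Phi> t)) / alpha + alpha * c\<^sup>2 / 8)"
    by (intro sum_mono ader_output_loss_le[OF N _ alpha c conv ex bounded]) auto
  also have "\<dots> = - ln (?\<Phi> T) / alpha + real T * (alpha * c\<^sup>2 / 8)"
    unfolding sum.distrib sum_divide_distrib[symmetric] telescope ader_potential_0[OF N] by simp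
  finally show ?thesis using potential by linarith
qed

lemma convex_on_above_tangent_within:
  fixes f :: "'a::real_inner \<Rightarrow> real"
  assumes X: "convex X" and f: "convex_on X f"
    and deriv: "(f has_derivative (\<lambda>h. g \<bullet> h)) (at x within X)" and x: "x \<in> X" and y: "y \<in> X"
  shows "f x + g \<bullet> (y - x) \<le> f y"
proof -
  define \<gamma> where "\<gamma> s = x + s *\<^sub>R (y - x)" for s :: real
  have \<gamma>_eq: "\<gamma> s = (1 - s) *\<^sub>R x + s *\<^sub>R y" for s
    unfolding \<gamma>_def by (simp add: algebra_simps)
  have \<gamma>X: "\<gamma> ` {0..1} \<subseteq> X"
    using X x y unfolding \<gamma>_eq by (auto intro: convexD_alt simp: convex_alt)
  have "(\<gamma> has_derivative (\<lambda>s. s *\<^sub>R (y - x))) (at 0 within {0..1})"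
    unfolding \<gamma>_def by (auto intro!: derivative_eq_intros)
  moreover have "(f has_derivative (\<lambda>h. g \<bullet> h)) (at (\<gamma> 0) within \<gamma> ` {0..1})"
    using has_derivative_subset[OF deriv \<gamma>X] by (simp add: \<gamma>_def)
  ultimately have "((f \<circ> \<gamma>) has_derivative (\<lambda>h. g \<bullet> h) \<circ> (\<lambda>s. s *\<^sub>R (y - x))) (at 0 within {0..1})"
    by (rule diff_chain_within)
  moreover have "(\<lambda>h. g \<bullet> h) \<circ> (\<lambda>s. s *\<^sub>R (y - x)) = (*) (g \<bullet> (y - x))"
    by (auto simp: fun_eq_iff)
  ultimately have "((f \<circ> \<gamma>) has_field_derivative (g \<bullet> (y - x))) (at 0 within {0..1})"
    by (simp add: has_field_derivative_def)
  hence lim: "((\<lambda>s. ((f \<circ> \<gamma>) s - (f \<circ> \<gamma>) 0) / (s - 0)) \<longlongrightarrow> g \<bullet> (y - x)) (at_right 0)"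
    unfolding has_field_derivative_iff using at_within_Icc_at_right[of "0::real" 1] by simp
  have "eventually (\<lambda>s. ((f \<circ> \<gamma>) s - (f \<circ> \<gamma>) 0) / (s - 0) \<le> f y - f x) (at_right (0::real))"
    using eventually_at_right_real[of 0 "1::real", OF zero_less_one]
  proof eventually_elim
    case (elim s)
    have "f (\<gamma> s) \<le> (1 - s) * f x + s * f y"
      unfolding \<gamma>_eq using elim x y by (intro convex_onD[OF f]) auto
    hence "f (\<gamma> s) - f (\<gamma> 0) \<le> s * (f y - f x)"
      by (simp add: \<gamma>_def algebra_simps)
    thus ?case using elim by (simp add: divide_simps mult.commute)
  qed
  from tendsto_upperbound[OF lim this] show ?thesis by simp
qed

lemma norm_projected_step_le:
  fixes z u g :: "'a::euclidean_space"
  assumes S: "closed S" "convex S" "S \<noteq> {}" and u: "u \<in> S"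
  shows "norm (closest_point S (z - eta *\<^sub>R g) - u) ^ 2
           \<le> norm (z - u) ^ 2 - 2 * eta * (g \<bullet> (z - u)) + eta\<^sup>2 * norm g ^ 2"
proof -
  have "norm (closest_point S (z - eta *\<^sub>R g) - u) \<le> norm ((z - u) - eta *\<^sub>R g)"
    using closest_point_lipschitz[OF S(2,1,3), of "z - eta *\<^sub>R g" u] closest_point_self[OF u]
    by (simp add: dist_norm algebra_simps)
  hence "norm (closest_point S (z - eta *\<^sub>R g) - u) ^ 2 \<le> norm ((z - u) - eta *\<^sub>R g) ^ 2"
    by (simp add: power_mono)
  also have "\<dots> = norm (z - u) ^ 2 - 2 * eta * (g \<bullet> (z - u)) + eta\<^sup>2 * norm g ^ 2"
    unfolding power2_norm_eq_inner
    by (simp add: inner_diff_left inner_diff_right inner_commute algebra_simps power2_eq_square)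
  finally show ?thesis .
qed

lemma power2_diff_le_of_le_add:
  fixes d e \<delta> D :: real
  assumes "0 \<le> d" "0 \<le> e" "d \<le> D" "e \<le> D" "d \<le> e + \<delta>" "0 \<le> \<delta>"
  shows "d\<^sup>2 - e\<^sup>2 \<le> 2 * D * \<delta>"
proof (cases "d \<le> e")
  case True
  hence "d\<^sup>2 \<le> e\<^sup>2" using assms by (simp add: power_mono)
  moreover have "0 \<le> 2 * D * \<delta>" using assms by simp
  ultimately show ?thesis by linarith
next
  case False
  have "d\<^sup>2 - e\<^sup>2 = (d - e) * (d + e)" by (simp add: power2_eq_square algebra_simps)
  also have "\<dots> \<le> \<delta> * (2 * D)" using assms False by (intro mult_mono) auto
  finally show ?thesis by (simp add: mult_ac)
qed

lemma dynamic_gradient_step_regret: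
  fixes X :: "'a::euclidean_space set" and Phi :: "'a \<Rightarrow> 'a"
  assumes X: "closed X" "convex X" "X \<noteq> {}"
    and conv: "convex_on X f" and deriv: "(f has_derivative (\<lambda>h. g \<bullet> h)) (at x within X)"
    and g: "norm g \<le> G"
    and diam: "\<And>y z. y \<in> X \<Longrightarrow> z \<in> X \<Longrightarrow> dist y z \<le> D"
    and Phi: "\<And>y. y \<in> X \<Longrightarrow> Phi y \<in> X" "\<And>y z. y \<in> X \<Longrightarrow> z \<in> X \<Longrightarrow> dist (Phi y) (Phi z) \<le> dist y z"
    and x: "x \<in> X" and u: "u \<in> X" and u': "u' \<in> X" and eta: "eta > 0"
  shows "f x - f u \<le> (norm (x - u) ^ 2 - norm (Phi (closest_point X (x - eta *\<^sub>R g)) - u') ^ 2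
                        + 2 * D * norm (u' - Phi u)) / (2 * eta) + eta * G\<^sup>2 / 2"
proof -
  define y where "y = closest_point X (x - eta *\<^sub>R g)"
  have y: "y \<in> X" unfolding y_def by (rule closest_point_in_set[OF X(1,3)])
  have linear: "f x - f u \<le> g \<bullet> (x - u)"
    using convex_on_above_tangent_within[OF X(2) conv deriv x u] by (simp add: inner_diff_right)
  have "norm (y - u) ^ 2 \<le> norm (x - u) ^ 2 - 2 * eta * (g \<bullet> (x - u)) + eta\<^sup>2 * G\<^sup>2"
  proof -
    have "eta\<^sup>2 * norm g ^ 2 \<le> eta\<^sup>2 * G\<^sup>2"
      using g by (intro mult_left_mono power_mono) auto
    thus ?thesis using norm_projected_step_le[OF X u, of x eta g] unfolding y_def by linarith
  qed
  moreover have "norm (Phi y - u') ^ 2 - norm (y - u) ^ 2 \<le> 2 * D * norm (u' - Phi u)"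
    \<comment> \<open>as \<open>Phi\<close> is nonexpansive, the comparator's drift is all that separates the two distances\<close>
  proof (rule power2_diff_le_of_le_add)
    have "norm (Phi y - u') \<le> norm (Phi y - Phi u) + norm (u' - Phi u)"
      using norm_triangle_ineq[of "Phi y - Phi u" "Phi u - u'"] by (simp add: norm_minus_commute)
    also have "\<dots> \<le> norm (y - u) + norm (u' - Phi u)"
      using Phi(2)[OF y u] by (simp add: dist_norm)
    finally show "norm (Phi y - u') \<le> norm (y - u) + norm (u' - Phi u)" .
    show "norm (Phi y - u') \<le> D" "norm (y - u) \<le> D"
      using diam[OF Phi(1)[OF y] u'] diam[OF y u] by (simp_all add: dist_norm)
  qed simp_all
  moreover have "2 * eta * (f x - f u) \<le> 2 * eta * (g \<bullet> (x - u))"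
    using linear eta by (intro mult_left_mono) auto
  ultimately have "2 * eta * (f x - f u)
      \<le> norm (x - u) ^ 2 - norm (Phi y - u') ^ 2 + 2 * D * norm (u' - Phi u) + eta\<^sup>2 * G\<^sup>2"
    by linarith
  thus ?thesis
    using eta by (simp add: y_def field_simps power2_eq_square)
qed

lemma ader_expert_in_set:
  assumes "closed X" "X \<noteq> {}" "\<And>t x. x \<in> X \<Longrightarrow> Phi t x \<in> X" "\<And>i. x1 i \<in> X"
  shows "ader_expert X Phi grad eta x1 i t \<in> X"
  by (induction t) (auto simp: assms closest_point_in_set)

lemma ader_expert_regret:
  fixes X :: "'a::euclidean_space set"
  assumes X: "closed X" "convex X" "X \<noteq> {}"
    and conv: "\<And>t. convex_on X (f t)"
    and grad: "\<And>t x. x \<in> X \<Longrightarrow> (f t has_derivative (\<lambda>h. grad t x \<bullet> h)) (at x within X)"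
    and grad_bound: "\<And>t x. x \<in> X \<Longrightarrow> norm (grad t x) \<le> G"
    and diam: "\<And>x y. x \<in> X \<Longrightarrow> y \<in> X \<Longrightarrow> dist x y \<le> D"
    and Phi: "\<And>t x. x \<in> X \<Longrightarrow> Phi t x \<in> X"
      "\<And>t x y. x \<in> X \<Longrightarrow> y \<in> X \<Longrightarrow> dist (Phi t x) (Phi t y) \<le> dist x y"
    and x1: "\<And>i. x1 i \<in> X"
    and u: "\<And>t. t \<in> {1..T+1} \<Longrightarrow> u t \<in> X"
    and eta: "eta i > 0"
  shows "(\<Sum>t=1..T. f t (ader_expert X Phi grad eta x1 i t) - f t (u t))
     \<le> (D\<^sup>2 + 2 * D * (\<Sum>t=1..T. norm (u (t + 1) - Phi t (u t)))) / (2 * eta i)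
        + eta i * real T * G\<^sup>2 / 2"
proof -
  define x where "x t = ader_expert X Phi grad eta x1 i t" for t
  define d where "d t = norm (x t - u t) ^ 2" for t
  have xX: "x t \<in> X" for t unfolding x_def by (rule ader_expert_in_set[OF X(1,3) Phi(1) x1])
  have step: "f t (x t) - f t (u t)
      \<le> (d t - d (Suc t) + 2 * D * norm (u (t + 1) - Phi t (u t))) / (2 * eta i) + eta i * G\<^sup>2 / 2"
    if t: "t \<in> {1..T}" for t
  proof -
    have "x (Suc t) = Phi t (closest_point X (x t - eta i *\<^sub>R grad t (x t)))"
      using t by (simp add: x_def)
    moreover have "f t (x t) - f t (u t)
        \<le> (norm (x t - u t) ^ 2 - norm (Phi t (closest_point X (x t - eta i *\<^sub>R grad t (x t))) - u (Suc t)) ^ 2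
            + 2 * D * norm (u (Suc t) - Phi t (u t))) / (2 * eta i) + eta i * G\<^sup>2 / 2"
      by (rule dynamic_gradient_step_regret[OF X conv grad[OF xX] grad_bound[OF xX] diam Phi(1) Phi(2) xX])
        (use t u eta in auto)
    ultimately show ?thesis by (simp add: d_def)
  qed
  have telescope: "(\<Sum>t=1..n. d t - d (Suc t)) = d 1 - d (Suc n)" for n
    by (induction n) simp_all
  have "d 1 \<le> D\<^sup>2"
    using diam[OF xX u, of 1 1] by (simp add: d_def dist_norm power_mono)
  moreover have "d (Suc T) \<ge> 0" by (simp add: d_def)
  ultimately have "d 1 - d (Suc T) \<le> D\<^sup>2" by linarith
  have "(\<Sum>t=1..T. f t (x t) - f t (u t))
      \<le> (\<Sum>t=1..T. (d t - d (Suc t) + 2 * D * norm (u (t + 1) - Phi t (u t))) / (2 * eta i)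
           + eta i * G\<^sup>2 / 2)"
    by (intro sum_mono step)
  also have "\<dots> = (d 1 - d (Suc T) + 2 * D * (\<Sum>t=1..T. norm (u (t + 1) - Phi t (u t)))) / (2 * eta i)
                   + eta i * real T * G\<^sup>2 / 2"
    unfolding sum.distrib sum_divide_distrib[symmetric] sum_distrib_left[symmetric] telescope
    by simp
  also have "\<dots> \<le> (D\<^sup>2 + 2 * D * (\<Sum>t=1..T. norm (u (t + 1) - Phi t (u t)))) / (2 * eta i)
                   + eta i * real T * G\<^sup>2 / 2"
    using \<open>d 1 - d (Suc T) \<le> D\<^sup>2\<close> eta by (simp add: divide_right_mono)
  finally show ?thesis by (simp add: x_def)
qed

lemma step_size_tradeoff:
  fixes A B eta :: real
  assumes A: "A \<ge> 0" and B: "B > 0" and eta: "eta > 0"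
    and near: "eta \<le> sqrt (A / B)" "sqrt (A / B) \<le> 2 * eta"
  shows "A / (2 * eta) + eta * B / 2 \<le> 3 / 2 * sqrt (A * B)"
proof -
  define s where "s = sqrt (A / B)"
  have s: "s \<ge> 0" and A_eq: "A = s\<^sup>2 * B" using A B by (simp_all add: s_def)
  have "A / (2 * eta) = s * B * (s / (2 * eta))"
    using eta by (simp add: A_eq power2_eq_square)
  also have "\<dots> \<le> s * B"
    using near eta B A by (intro mult_left_le) (auto simp: s_def)
  finally have "A / (2 * eta) \<le> s * B" .
  moreover have "eta * B / 2 \<le> s * B / 2"
    using near B by (simp add: s_def)
  moreover have "sqrt (A * B) = s * B"
    using s B by (simp add: A_eq real_sqrt_mult power2_eq_square)
  ultimately show ?thesis by linarith
qed

lemma two_pow_floor_half_log2_brackets_sqrt: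
  fixes R :: real
  assumes "R \<ge> 1"
  shows "2 ^ nat \<lfloor>log 2 R / 2\<rfloor> \<le> sqrt R" "sqrt R < 2 * 2 ^ nat \<lfloor>log 2 R / 2\<rfloor>"
proof -
  define n where "n = nat \<lfloor>log 2 R / 2\<rfloor>"
  have n: "real n \<le> log 2 R / 2" "log 2 R / 2 < real n + 1"
    using assms by (simp_all add: n_def) linarith
  have sqrt_eq: "sqrt R = 2 powr (log 2 R / 2)"
    using assms powr_half_sqrt_powr[of 2 "log 2 R"] by simp
  show "2 ^ n \<le> sqrt R"
    unfolding sqrt_eq using n by (simp add: powr_realpow[symmetric])
  have "sqrt R < 2 powr (real n + 1)"
    unfolding sqrt_eq using n by simp
  thus "sqrt R < 2 * 2 ^ n"
    by (simp add: powr_add powr_realpow)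
qed

lemma exp_weights_tuned_rate:
  fixes c \<tau> :: real
  assumes "\<tau> > 0" "c > 0"
  shows "1 / sqrt (8 / (\<tau> * c\<^sup>2)) = c * sqrt (2 * \<tau>) / 4"
    and "\<tau> * (sqrt (8 / (\<tau> * c\<^sup>2)) * c\<^sup>2 / 8) = c * sqrt (2 * \<tau>) / 4"
proof -
  have "8 / (\<tau> * c\<^sup>2) = (4 / (c * sqrt (2 * \<tau>)))\<^sup>2"
    using assms by (simp add: power_divide power_mult_distrib)
  hence rate: "sqrt (8 / (\<tau> * c\<^sup>2)) = 4 / (c * sqrt (2 * \<tau>))"
    using assms by simp
  show "1 / sqrt (8 / (\<tau> * c\<^sup>2)) = c * sqrt (2 * \<tau>) / 4"
    unfolding rate by simp
  have "sqrt (2 * \<tau>) * sqrt (2 * \<tau>) = 2 * \<tau>" using assms by simp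
  thus "\<tau> * (sqrt (8 / (\<tau> * c\<^sup>2)) * c\<^sup>2 / 8) = c * sqrt (2 * \<tau>) / 4"
    unfolding rate using assms by (simp add: field_simps power2_eq_square)
qed

lemma grid_step_size_near_optimal:
  fixes D G R :: real and T :: nat
  assumes D: "D > 0" and G: "G > 0" and T: "T \<ge> 1" and R: "R \<ge> 1"
  defines "i \<equiv> nat \<lfloor>log 2 R / 2\<rfloor> + 1"
  shows "2 ^ (i - 1) * D / G * sqrt (1 / real T) \<le> sqrt (D\<^sup>2 * R / (real T * G\<^sup>2))"
    and "sqrt (D\<^sup>2 * R / (real T * G\<^sup>2)) \<le> 2 * (2 ^ (i - 1) * D / G * sqrt (1 / real T))"
proof -
  define \<rho> where "\<rho> = D / G * sqrt (1 / real T)"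
  have \<rho>: "\<rho> > 0" using D G T by (simp add: \<rho>_def)
  have opt: "sqrt (D\<^sup>2 * R / (real T * G\<^sup>2)) = sqrt R * \<rho>"
    using D G by (simp add: \<rho>_def real_sqrt_divide real_sqrt_mult field_simps)
  have eta: "2 ^ (i - 1) * D / G * sqrt (1 / real T) = 2 ^ nat \<lfloor>log 2 R / 2\<rfloor> * \<rho>"
    by (simp add: i_def \<rho>_def)
  note bracket = two_pow_floor_half_log2_brackets_sqrt[OF R]
  show "2 ^ (i - 1) * D / G * sqrt (1 / real T) \<le> sqrt (D\<^sup>2 * R / (real T * G\<^sup>2))"
    unfolding eta opt using bracket(1) \<rho> by (intro mult_right_mono) auto
  show "sqrt (D\<^sup>2 * R / (real T * G\<^sup>2)) \<le> 2 * (2 ^ (i - 1) * D / G * sqrt (1 / real T))"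
    unfolding eta opt mult.assoc[symmetric] using bracket(2) \<rho> by (intro mult_right_mono) auto
qed

lemma ader_grid_expert_regret:
  fixes X :: "'a::euclidean_space set"
  assumes X: "closed X" "convex X" "X \<noteq> {}"
    and conv: "\<And>t. convex_on X (f t)"
    and grad: "\<And>t x. x \<in> X \<Longrightarrow> (f t has_derivative (\<lambda>h. grad t x \<bullet> h)) (at x within X)"
    and grad_bound: "\<And>t x. x \<in> X \<Longrightarrow> norm (grad t x) \<le> G"
    and diam: "\<And>x y. x \<in> X \<Longrightarrow> y \<in> X \<Longrightarrow> dist x y \<le> D"
    and Phi: "\<And>t x. x \<in> X \<Longrightarrow> Phi t x \<in> X"
      "\<And>t x y. x \<in> X \<Longrightarrow> y \<in> X \<Longrightarrow> dist (Phi t x) (Phi t y) \<le> dist x y"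
    and x1: "\<And>i. x1 i \<in> X"
    and u: "\<And>t. t \<in> {1..T+1} \<Longrightarrow> u t \<in> X"
    and pos: "T \<ge> 1" "G > 0" "D > 0"
  defines "eta \<equiv> \<lambda>i. 2 ^ (i - 1) * D / G * sqrt (1 / real T)"
    and "P \<equiv> \<Sum>t=1..T. norm (u (t + 1) - Phi t (u t))"
  defines "i \<equiv> nat \<lfloor>log 2 (1 + 2 * P / D) / 2\<rfloor> + 1"
  shows "(\<Sum>t=1..T. f t (ader_expert X Phi grad eta x1 i t) - f t (u t))
           \<le> 3 * G / 2 * sqrt (real T * (D\<^sup>2 + 2 * D * P))"
proof -
  have R: "1 + 2 * P / D \<ge> 1" and A: "D\<^sup>2 + 2 * D * P = D\<^sup>2 * (1 + 2 * P / D)"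
    using pos by (simp_all add: P_def sum_nonneg field_simps power2_eq_square)
  have "(\<Sum>t=1..T. f t (ader_expert X Phi grad eta x1 i t) - f t (u t))
      \<le> (D\<^sup>2 + 2 * D * P) / (2 * eta i) + eta i * (real T * G\<^sup>2) / 2"
    using ader_expert_regret[where eta = eta and i = i, OF X conv grad grad_bound diam Phi x1 u] pos
    by (simp add: P_def eta_def mult.assoc)
  also have "\<dots> \<le> 3 / 2 * sqrt ((D\<^sup>2 + 2 * D * P) * (real T * G\<^sup>2))"
    using grid_step_size_near_optimal[OF pos(3,2,1) R] pos R
    by (intro step_size_tradeoff) (auto simp: A eta_def i_def)
  also have "\<dots> = 3 * G / 2 * sqrt (real T * (D\<^sup>2 + 2 * D * P))"
    using pos by (simp add: real_sqrt_mult mult_ac)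
  finally show ?thesis .
qed

lemma ader_prior_tuned_overhead_le:
  fixes c :: real and T :: nat
  assumes "T \<ge> 1" "c > 0" "i \<ge> 1"
  defines "alpha \<equiv> sqrt (8 / (real T * c\<^sup>2))"
  shows "ln (1 / ader_prior N i) / alpha + real T * (alpha * c\<^sup>2 / 8)
           \<le> c * sqrt (2 * real T) / 4 * (1 + 2 * ln (real i + 1))"
proof -
  have "1 / alpha = c * sqrt (2 * real T) / 4"
    using exp_weights_tuned_rate(1)[of "real T" c] assms by (simp add: alpha_def)
  hence "ln (1 / ader_prior N i) / alpha = ln (1 / ader_prior N i) * (c * sqrt (2 * real T) / 4)"
    by (metis times_divide_eq_right mult.right_neutral)
  also have "\<dots> \<le> 2 * ln (real i + 1) * (c * sqrt (2 * real T) / 4)"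
    using ln_inverse_ader_prior_le[OF assms(3)] assms by (intro mult_right_mono) auto
  finally show ?thesis
    using exp_weights_tuned_rate(2)[of "real T" c] assms by (simp add: alpha_def algebra_simps)
qed

lemma ader_grid_index_bounds:
  fixes P D :: real and T :: nat
  assumes "0 \<le> P" "P \<le> real T * D" "D > 0"
  shows "nat \<lfloor>log 2 (1 + 2 * P / D) / 2\<rfloor> + 1 \<le> nat \<lceil>log 2 (1 + 2 * real T) / 2\<rceil> + 1"
    and "\<lfloor>log 2 (1 + 2 * P / D) / 2\<rfloor> \<ge> 0"
proof -
  have R: "1 \<le> 1 + 2 * P / D" "1 + 2 * P / D \<le> 1 + 2 * real T"
    using assms by (auto simp: field_simps)
  have "\<lfloor>log 2 (1 + 2 * P / D) / 2\<rfloor> \<le> \<lceil>log 2 (1 + 2 * real T) / 2\<rceil>"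
    using R by (intro order.trans[OF floor_mono floor_le_ceiling] divide_right_mono log_mono) auto
  thus "nat \<lfloor>log 2 (1 + 2 * P / D) / 2\<rfloor> + 1 \<le> nat \<lceil>log 2 (1 + 2 * real T) / 2\<rceil> + 1"
    by (simp add: nat_mono)
  show "\<lfloor>log 2 (1 + 2 * P / D) / 2\<rfloor> \<ge> 0"
    using R by simp
qed

theorem theorem5:
  fixes X :: "'a::euclidean_space set"
    and f :: "nat \<Rightarrow> 'a \<Rightarrow> real"
    and grad :: "nat \<Rightarrow> 'a \<Rightarrow> 'a"
    and Phi :: "nat \<Rightarrow> 'a \<Rightarrow> 'a"
    and x1 :: "nat \<Rightarrow> 'a"
    and u :: "nat \<Rightarrow> 'a"
    and a c G D :: real and T :: nat
  assumes X: "closed X" "convex X" "X \<noteq> {}"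
    and conv: "\<And>t. convex_on X (f t)"
    and grad: "\<And>t x. x \<in> X \<Longrightarrow> (f t has_derivative (\<lambda>h. grad t x \<bullet> h)) (at x within X)"
    and A1: "\<And>t x. x \<in> X \<Longrightarrow> a \<le> f t x \<and> f t x \<le> a + c"
    and A2: "\<And>t x. x \<in> X \<Longrightarrow> norm (grad t x) \<le> G"
    and A3: "0 \<in> X" "\<And>x y. x \<in> X \<Longrightarrow> y \<in> X \<Longrightarrow> dist x y \<le> D"
    and A4: "\<And>t x. x \<in> X \<Longrightarrow> Phi t x \<in> X"
            "\<And>t x y. x \<in> X \<Longrightarrow> y \<in> X \<Longrightarrow> dist (Phi t x) (Phi t y) \<le> dist x y"
    and pos: "T \<ge> 1" "c > 0" "G > 0" "D > 0"
    and x1: "\<And>i. x1 i \<in> X"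
    and u: "\<And>t. t \<in> {1..T+1} \<Longrightarrow> u t \<in> X"
  defines "N \<equiv> nat \<lceil>log 2 (1 + 2 * real T) / 2\<rceil> + 1"
    and "eta \<equiv> (\<lambda>i. 2 ^ (i - 1) * D / G * sqrt (1 / real T))"
    and "alpha \<equiv> sqrt (8 / (real T * c\<^sup>2))"
    and "P \<equiv> (\<Sum>t = 1..T. norm (u (t + 1) - Phi t (u t)))"
    and "k \<equiv> \<lfloor>log 2 (1 + 2 * (\<Sum>t = 1..T. norm (u (t + 1) - Phi t (u t))) / D) / 2\<rfloor> + 1"
  shows "(\<Sum>t = 1..T. f t (ader_output f N alpha (ader_expert X Phi grad eta x1) t))
           - (\<Sum>t = 1..T. f t (u t))
         \<le> 3 * G / 2 * sqrt (real T * (D\<^sup>2 + 2 * D * P))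
           + c * sqrt (2 * real T) / 4 * (1 + 2 * ln (real_of_int k + 1))"
proof -
  let ?ex = "ader_expert X Phi grad eta x1"
  define i where "i = nat \<lfloor>log 2 (1 + 2 * P / D) / 2\<rfloor> + 1"
  have N: "N \<ge> 1" and alpha: "alpha > 0"
    using pos by (simp_all add: N_def alpha_def)
  have P: "0 \<le> P" "P \<le> real T * D"
    using sum_bounded_above[of "{1..T}" "\<lambda>t. norm (u (t + 1) - Phi t (u t))" D]
      A3(2)[OF u A4(1)[OF u]] by (auto simp: P_def dist_norm sum_nonneg)
  hence i: "i \<in> {1..N}" and k: "real_of_int k = real i"
    using ader_grid_index_bounds[where P = P and D = D and T = T] pos
    by (simp_all add: i_def N_def k_def P_def)
  have "(\<Sum>t=1..T. f t (ader_output f N alpha ?ex t))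
      \<le> (\<Sum>t=1..T. f t (?ex i t)) + ln (1 / ader_prior N i) / alpha + real T * (alpha * c\<^sup>2 / 8)"
    by (rule ader_output_regret[OF N alpha pos(2) conv _ A1 i])
      (rule ader_expert_in_set[OF X(1,3) A4(1) x1])
  moreover have "(\<Sum>t=1..T. f t (?ex i t) - f t (u t)) \<le> 3 * G / 2 * sqrt (real T * (D\<^sup>2 + 2 * D * P))"
    unfolding i_def P_def eta_def
    by (rule ader_grid_expert_regret[OF X conv grad A2 A3(2) A4 x1 u pos(1,3,4)])
  moreover have "ln (1 / ader_prior N i) / alpha + real T * (alpha * c\<^sup>2 / 8)
      \<le> c * sqrt (2 * real T) / 4 * (1 + 2 * ln (real_of_int k + 1))"
    using ader_prior_tuned_overhead_le[OF pos(1,2), of i N, folded alpha_def] i k by simp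
  ultimately show ?thesis unfolding sum_subtractf by linarith
qed

end
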